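(* If $\tau$ is a tau function of the Pfaff–Toda hierarchy, then $$\tfrac12D_{t_1}D_{\bar t_1}\tau(s,r)\cdot\tau(s,r)+\tau(s-1,r)\tau(s+1,r)-\tau(s,r-1)\tau(s,r+1)=0$$ and $$D_{t_1}\tau(s,r)\cdot\tau(s+1,r-1)+D_{\bar t_1}\tau(s,r-1)\cdot\tau(s+1,r)=0.$$
   Context: Let $\boldsymbol t=(t_1,t_2,\dots)$, $\bar{\boldsymbol t}=(\bar t_1,\bar t_2,\dots)$ be infinite sequences of continuous variables and $s,r\in\mathbb Z$. Put $[z]=(z,z^2/2,z^3/3,\dots)$, $\xi(\boldsymbol t,z)=\sum_{k\ge1}t_kz^k$. For a formal Laurent series $f(z)=\sum_na_nz^n$ write $\oint\frac{dz}{2\pi i}f(z)=a_{-1}$. A tau function of the Pfaff–Toda hierarchy is a nowhere vanishing function $\tau(s,r,\boldsymbol t,\bar{\boldsymbol t})$ such that for all $(s,r,\boldsymbol t,\bar{\boldsymbol t})$, $(s',r',\boldsymbol t',\bar{\boldsymbol t}')$: $$\oint\frac{dz}{2\pi i}z^{s'+r'-s-r}e^{\xi(\boldsymbol t'-\boldsymbol t,z)}\tau(s',r',\boldsymbol t'-[z^{-1}],\bar{\boldsymbol t}')\tau(s,r,\boldsymbol t+[z^{-1}],\bar{\boldsymbol t})+\oint\frac{dz}{2\pi i}z^{s+r-s'-r'-4}e^{\xi(\boldsymbol t-\boldsymbol t',z)}\tau(s'+1,r'+1,\boldsymbol t'+[z^{-1}],\bar{\boldsymbol t}')\tau(s-1,r-1,\boldsymbol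 t-[z^{-1}],\bar{\boldsymbol t})$$ $$=\oint\frac{dz}{2\pi i}z^{s'-r'-s+r}e^{\xi(\bar{\boldsymbol t}'-\bar{\boldsymbol t},z^{-1})}\tau(s'+1,r',\boldsymbol t',\bar{\boldsymbol t}'-[z])\tau(s-1,r,\boldsymbol t,\bar{\boldsymbol t}+[z])+\oint\frac{dz}{2\pi i}z^{s-r-s'+r'}e^{\xi(\bar{\boldsymbol t}-\bar{\boldsymbol t}',z^{-1})}\tau(s',r'+1,\boldsymbol t',\bar{\boldsymbol t}'+[z])\tau(s,r-1,\boldsymbol t,\bar{\boldsymbol t}-[z]),$$ where the two left-hand integrands are expanded at $z=\infty$ and the two right-hand ones at $z=0$. Abbreviate $\tau(s,r)=\tau(s,r,\boldsymbol t,\bar{\boldsymbol t})$. Hirota's bilinear derivative: $D_xf\cdot g=(\partial_xf)g-f\,\partial_xg$, and $D_xD_yf\cdot g=\partial_u\partial_v\big(f(x+u,y+v)g(x-u,y-v)\big)|_{u=v=0}$. *)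

theory Defs
  imports Complex_Main "HOL-Library.Poly_Mapping"
begin

text \<open>
  A function of the times (t, tbar) is represented by its formal
  power series: the coefficient of the monomial t^a tbar^b, where a, b are finitely
  supported exponent vectors.  The variable with index i (i = 0,1,2,...) is t_(i+1)
  (resp. tbar_(i+1)); so index 0 is t_1.
\<close>

type_synonym mono = "nat \<Rightarrow>\<^sub>0 nat"
type_synonym fser = "mono \<Rightarrow> mono \<Rightarrow> complex"

definition wt :: "mono \<Rightarrow> nat" where
  "wt e = (\<Sum>i\<in>Poly_Mapping.keys e. (i + 1) * Poly_Mapping.lookup e i)"

text \<open>coefficient of w^j in F(t + eps [w], tbar), where [w] = (w, w^2/2, w^3/3, ...)\<close>
definition shiftT :: "complex \<Rightarrow> fser \<Rightarrow> nat \<Rightarrow> fser" where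
  "shiftT eps F j = (\<lambda>a b. \<Sum>e\<in>{e. wt e = j}. F (a + e) b *
      (\<Prod>i\<in>Poly_Mapping.keys e. of_nat ((Poly_Mapping.lookup a i + Poly_Mapping.lookup e i) choose Poly_Mapping.lookup e i)
                     * (eps / of_nat (i + 1)) ^ Poly_Mapping.lookup e i))"

text \<open>coefficient of w^j in F(t, tbar + eps [w])\<close>
definition shiftTb :: "complex \<Rightarrow> fser \<Rightarrow> nat \<Rightarrow> fser" where
  "shiftTb eps F j = (\<lambda>a b. \<Sum>e\<in>{e. wt e = j}. F a (b + e) *
      (\<Prod>i\<in>Poly_Mapping.keys e. of_nat ((Poly_Mapping.lookup b i + Poly_Mapping.lookup e i) choose Poly_Mapping.lookup e i)
                     * (eps / of_nat (i + 1)) ^ Poly_Mapping.lookup e i))"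

text \<open>coefficient of x'^c' x^c in the Schur polynomial p_k(sigma (x' - x)),
  i.e. in the coefficient of z^k of exp(xi(sigma (x' - x), z)); here k = wt c' + wt c\<close>
definition schur :: "complex \<Rightarrow> mono \<Rightarrow> mono \<Rightarrow> complex" where
  "schur sigma c' c =
     (\<Prod>i\<in>Poly_Mapping.keys c'. sigma ^ Poly_Mapping.lookup c' i / fact (Poly_Mapping.lookup c' i)) *
     (\<Prod>i\<in>Poly_Mapping.keys c. (- sigma) ^ Poly_Mapping.lookup c i / fact (Poly_Mapping.lookup c i))"

definition pairsum :: "int \<Rightarrow> (nat \<Rightarrow> nat \<Rightarrow> complex) \<Rightarrow> complex" where
  "pairsum n g = (if n < 0 then 0 else (\<Sum>j\<le>nat n. g j (nat n - j)))"

text \<open>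
  Coefficient of t'^a' tbar'^b' t^a tbar^b in
    Res_z  z^m exp(xi(sigma (t' - t), z)) F'(t' + eps' [z^-1], tbar') F(t + eps [z^-1], tbar)
  (expansion at z = infinity), where d = m + 1: the residue picks k - j - l = -d
  with k the z-degree of the exponential and j, l the z^-1-degrees of the tau factors.
\<close>
definition resT :: "complex \<Rightarrow> int \<Rightarrow> fser \<Rightarrow> complex \<Rightarrow> fser \<Rightarrow> complex
                    \<Rightarrow> mono \<Rightarrow> mono \<Rightarrow> mono \<Rightarrow> mono \<Rightarrow> complex" where
  "resT sigma d F' eps' F eps a' b' a b =
     (\<Sum>(c', a0')\<in>{p. fst p + snd p = a'}. \<Sum>(c, a0)\<in>{p. fst p + snd p = a}.
        schur sigma c' c *
        pairsum (int (wt c' + wt c) + d)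
          (\<lambda>j l. shiftT eps' F' j a0' b' * shiftT eps F l a0 b))"

text \<open>
  Coefficient of t'^a' tbar'^b' t^a tbar^b in
    Res_z  z^m exp(xi(sigma (tbar' - tbar), z^-1)) F'(t', tbar' + eps' [z]) F(t, tbar + eps [z])
  (expansion at z = 0), where d = - m - 1: the residue picks j + l - k = d.
\<close>
definition resTb :: "complex \<Rightarrow> int \<Rightarrow> fser \<Rightarrow> complex \<Rightarrow> fser \<Rightarrow> complex
                    \<Rightarrow> mono \<Rightarrow> mono \<Rightarrow> mono \<Rightarrow> mono \<Rightarrow> complex" where
  "resTb sigma d F' eps' F eps a' b' a b =
     (\<Sum>(c', b0')\<in>{p. fst p + snd p = b'}. \<Sum>(c, b0)\<in>{p. fst p + snd p = b}.
        schur sigma c' c *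
        pairsum (int (wt c' + wt c) + d)
          (\<lambda>j l. shiftTb eps' F' j a' b0' * shiftTb eps F l a b0))"

text \<open>Tau function of the Pfaff--Toda hierarchy (formal version): nonvanishing, and
  the bilinear identity holds as an identity of formal power series in
  t', tbar', t, tbar, for all integers s, r, s', r'.\<close>
definition pfaff_toda_tau :: "(int \<Rightarrow> int \<Rightarrow> fser) \<Rightarrow> bool" where
  "pfaff_toda_tau tau \<longleftrightarrow>
     (\<forall>s r. tau s r 0 0 \<noteq> 0) \<and>
     (\<forall>s r s' r' a' b' a b.
        resT 1 ((s' + r' - s - r) + 1) (tau s' r') (-1) (tau s r) 1 a' b' a b
      + resT (-1) ((s + r - s' - r' - 4) + 1) (tau (s' + 1) (r' + 1)) 1 (tau (s - 1) (r - 1)) (-1) a' b' a b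
      = resTb 1 (- (s' - r' - s + r) - 1) (tau (s' + 1) r') (-1) (tau (s - 1) r) 1 a' b' a b
      + resTb (-1) (- (s - r - s' + r') - 1) (tau s' (r' + 1)) 1 (tau s (r - 1)) (-1) a' b' a b)"

definition fmul :: "fser \<Rightarrow> fser \<Rightarrow> fser" where
  "fmul F G = (\<lambda>a b. \<Sum>(a1, a2)\<in>{p. fst p + snd p = a}. \<Sum>(b1, b2)\<in>{q. fst q + snd q = b}.
                  F a1 b1 * G a2 b2)"

definition dT :: "fser \<Rightarrow> fser" where
  "dT F = (\<lambda>a b. of_nat (Poly_Mapping.lookup a 0 + 1) * F (a + Poly_Mapping.single 0 1) b)"

definition dTb :: "fser \<Rightarrow> fser" where
  "dTb F = (\<lambda>a b. of_nat (Poly_Mapping.lookup b 0 + 1) * F a (b + Poly_Mapping.single 0 1))"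

definition hirotaT :: "fser \<Rightarrow> fser \<Rightarrow> fser" where
  "hirotaT F G = (\<lambda>a b. fmul (dT F) G a b - fmul F (dT G) a b)"

definition hirotaTb :: "fser \<Rightarrow> fser \<Rightarrow> fser" where
  "hirotaTb F G = (\<lambda>a b. fmul (dTb F) G a b - fmul F (dTb G) a b)"

definition hirotaTTb :: "fser \<Rightarrow> fser \<Rightarrow> fser" where
  "hirotaTTb F G = (\<lambda>a b. fmul (dT (dTb F)) G a b - fmul (dT F) (dTb G) a b
                        - fmul (dTb F) (dT G) a b + fmul F (dT (dTb G)) a b)"

end

theory Submission
  imports Defs "HOL-Library.FuncSet"
begin

text \<open>
  Both equations are instances of the bilinear identity restricted to the
  diagonal t' = t, tbar' = tbar:
  \<^item> at (s, r, s', r') = (s + 1, r, s - 1, r), differentiated in t'_1 before restricting: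
    on the left the derivative falls on the exponential factor and produces
    tau(s-1,r) tau(s+1,r) - tau(s,r+1) tau(s,r-1); on the right it falls on the first
    tau factor, and the residue yields the derivatives of tau(s,r) in t_1 and tbar_1;
  \<^item> at (s, r, s', r') = (s + 1, r - 1, s, r), restricted without differentiating, giving
    the second equation.
  On the diagonal the exponential factors equal 1 (their coefficients cancel by the
  binomial theorem), so a residue with index d reduces to the sum over j + l = d of
  products of shift coefficients: it vanishes for d < 0, is the product for d = 0, and
  consists of first derivatives for d = 1.
\<close>

section \<open>Sums over splittings of exponent vectors\<close>

abbreviation splits :: "mono \<Rightarrow> (mono \<times> mono) set" where
  "splits A \<equiv> {p. fst p + snd p = A}"

lemma finite_below: "finite {x::mono. \<forall>i. Poly_Mapping.lookup x i \<le> Poly_Mapping.lookup A i}"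
proof -
  let ?K = "Poly_Mapping.keys A"
  let ?Below = "{x::mono. \<forall>i. Poly_Mapping.lookup x i \<le> Poly_Mapping.lookup A i}"
  define M where "M = Max (Poly_Mapping.lookup A ` ?K)"
  let ?Funs = "{f. \<forall>i. (i \<in> ?K \<longrightarrow> f i \<in> {0..M}) \<and> (i \<notin> ?K \<longrightarrow> f i = 0)}"
  have "finite ?Funs"
    by (rule finite_set_of_finite_funs) simp_all
  moreover have "Poly_Mapping.lookup ` ?Below \<subseteq> ?Funs"
  proof (intro image_subsetI CollectI allI conjI impI)
    fix x i assume x: "x \<in> ?Below"
    show "Poly_Mapping.lookup x i \<in> {0..M}" if "i \<in> ?K"
    proof -
      have "Poly_Mapping.lookup A i \<le> M"
        unfolding M_def by (rule Max_ge) (simp_all add: that)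
      then show ?thesis using x by (metis atLeastAtMost_iff le0 le_trans mem_Collect_eq)
    qed
    show "Poly_Mapping.lookup x i = 0" if "i \<notin> ?K"
      using x that by (simp add: in_keys_iff) (metis le_zero_eq)
  qed
  moreover have "inj_on Poly_Mapping.lookup ?Below"
    by (rule inj_onI) (rule poly_mapping_eqI, simp)
  ultimately show ?thesis
    using finite_imageD finite_subset by blast
qed

lemma finite_splits: "finite (splits A)"
proof -
  have "splits A \<subseteq> (\<lambda>x. (x, A - x)) ` {x::mono. \<forall>i. Poly_Mapping.lookup x i \<le> Poly_Mapping.lookup A i}"
  proof
    fix p assume "p \<in> splits A"
    then have sum: "fst p + snd p = A" by simp
    then have "p = (fst p, A - fst p)" by auto
    moreover have "\<forall>i. Poly_Mapping.lookup (fst p) i \<le> Poly_Mapping.lookup A i"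
      using sum by (auto simp: lookup_add)
    ultimately show "p \<in> (\<lambda>x. (x, A - x)) ` {x. \<forall>i. Poly_Mapping.lookup x i \<le> Poly_Mapping.lookup A i}"
      by blast
  qed
  then show ?thesis using finite_imageI[OF finite_below] by (rule finite_subset)
qed

lemma sum_splits_assoc:
  "(\<Sum>(x,y)\<in>splits A. \<Sum>(u,v)\<in>splits x. \<Sum>(w,z)\<in>splits y. f u v w z)
   = (\<Sum>(u,v,w,z)\<in>{(u,v,w,z). u + v + w + z = A}. f u v w z)"
proof -
  have "(\<Sum>(x,y)\<in>splits A. \<Sum>(u,v)\<in>splits x. \<Sum>(w,z)\<in>splits y. f u v w z)
      = (\<Sum>p\<in>splits A. \<Sum>q\<in>splits (fst p) \<times> splits (snd p). f (fst (fst q)) (snd (fst q)) (fst (snd q)) (snd (snd q)))"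
    by (auto simp: case_prod_beta sum.cartesian_product intro!: sum.cong)
  also have "\<dots> = (\<Sum>pq\<in>Sigma (splits A) (\<lambda>p. splits (fst p) \<times> splits (snd p)).
      f (fst (fst (snd pq))) (snd (fst (snd pq))) (fst (snd (snd pq))) (snd (snd (snd pq))))"
    by (subst sum.Sigma) (auto simp: finite_splits case_prod_beta)
  also have "\<dots> = (\<Sum>(u,v,w,z)\<in>{(u,v,w,z). u + v + w + z = A}. f u v w z)"
    by (rule sum.reindex_bij_witness[where i="\<lambda>(u,v,w,z). ((u+v, w+z), ((u,v),(w,z)))"
          and j="\<lambda>pq. (fst (fst (snd pq)), snd (fst (snd pq)), fst (snd (snd pq)), snd (snd (snd pq)))"])
       (auto simp: add.assoc)
  finally show ?thesis .
qed

lemma sum_splits_interchange: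
  "(\<Sum>(x,y)\<in>splits A. \<Sum>(u,v)\<in>splits x. \<Sum>(w,z)\<in>splits y. f u v w z)
   = (\<Sum>(x,y)\<in>splits A. \<Sum>(u,w)\<in>splits x. \<Sum>(v,z)\<in>splits y. f u v w z)"
  unfolding sum_splits_assoc
  by (rule sum.reindex_bij_witness[where i="\<lambda>(u,v,w,z). (u,w,v,z)" and j="\<lambda>(u,v,w,z). (u,w,v,z)"])
     (auto simp: ac_simps)

lemma sum_splits_factor:
  fixes G :: "mono \<Rightarrow> mono \<Rightarrow> complex"
  shows "(\<Sum>(x,y)\<in>splits A. \<Sum>(u,w)\<in>splits x. \<Sum>(v,z)\<in>splits y. G u v * H (u+v) w z)
   = (\<Sum>(x,y)\<in>splits A. (\<Sum>(u,v)\<in>splits x. G u v) * (\<Sum>(w,z)\<in>splits y. H x w z))"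
proof -
  have "(\<Sum>(x,y)\<in>splits A. \<Sum>(u,w)\<in>splits x. \<Sum>(v,z)\<in>splits y. G u v * H (u+v) w z)
     = (\<Sum>(x,y)\<in>splits A. \<Sum>(u,v)\<in>splits x. \<Sum>(w,z)\<in>splits y. G u v * H (u+v) w z)"
    by (rule sum_splits_interchange[symmetric])
  also have "\<dots> = (\<Sum>(x,y)\<in>splits A. (\<Sum>(u,v)\<in>splits x. G u v) * (\<Sum>(w,z)\<in>splits y. H x w z))"
    by (auto intro!: sum.cong simp: case_prod_beta) (rule sum_product[symmetric])
  finally show ?thesis .
qed

lemma sum_splits_delta:
  fixes f :: "mono \<Rightarrow> complex"
  shows "(\<Sum>(X,Y)\<in>splits (A + D). if X = D then f Y else 0) = f A"
proof -
  have "(\<Sum>(X,Y)\<in>splits (A + D). if X = D then f Y else 0)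
      = (\<Sum>p\<in>splits (A + D). if p = (D, A) then f (snd p) else 0)"
  proof (rule sum.cong[OF refl])
    fix p assume "p \<in> splits (A + D)"
    then have "fst p + snd p = A + D" by simp
    then have "fst p = D \<longleftrightarrow> p = (D, A)"
      by (metis add.commute add_left_imp_eq prod.collapse fst_conv)
    then show "(case p of (X,Y) \<Rightarrow> if X = D then f Y else 0) = (if p = (D, A) then f (snd p) else 0)"
      by (auto simp: case_prod_beta)
  qed
  also have "\<dots> = f A"
    by (subst sum.delta) (auto simp: finite_splits add.commute)
  finally show ?thesis .
qed

lemma sum_splits_swap: "(\<Sum>p\<in>splits A. f p) = (\<Sum>p\<in>splits A. f (snd p, fst p))"
  by (rule sum.reindex_bij_witness[where i="\<lambda>p. (snd p, fst p)" and j="\<lambda>p. (snd p, fst p)"])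
     (auto simp: add.commute)

lemma sum_splits_prod:
  fixes \<phi> :: "nat \<Rightarrow> nat \<Rightarrow> nat \<Rightarrow> complex"
  shows "(\<Sum>(c',c)\<in>splits C. \<Prod>i\<in>Poly_Mapping.keys C. \<phi> i (Poly_Mapping.lookup c' i) (Poly_Mapping.lookup c i))
   = (\<Prod>i\<in>Poly_Mapping.keys C. \<Sum>m\<in>{0..Poly_Mapping.lookup C i}. \<phi> i m (Poly_Mapping.lookup C i - m))"
proof -
  let ?K = "Poly_Mapping.keys C"
  let ?B = "\<lambda>i. {0..Poly_Mapping.lookup C i}"
  define mk where "mk g = Abs_poly_mapping (\<lambda>i. if i \<in> ?K then g i else 0)" for g :: "nat \<Rightarrow> nat"
  have lookup_mk: "Poly_Mapping.lookup (mk g) i = (if i \<in> ?K then g i else 0)" for g i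
    unfolding mk_def by (subst lookup_Abs_poly_mapping) (auto intro: finite_subset[of _ ?K])
  have "(\<Prod>i\<in>?K. \<Sum>m\<in>?B i. \<phi> i m (Poly_Mapping.lookup C i - m))
      = (\<Sum>g\<in>PiE ?K ?B. \<Prod>i\<in>?K. \<phi> i (g i) (Poly_Mapping.lookup C i - g i))"
    by (rule prod_sum_PiE) auto
  also have "\<dots> = (\<Sum>(c',c)\<in>splits C. \<Prod>i\<in>?K. \<phi> i (Poly_Mapping.lookup c' i) (Poly_Mapping.lookup c i))"
  proof (rule sum.reindex_bij_witness[where i="\<lambda>p. restrict (Poly_Mapping.lookup (fst p)) ?K"
        and j="\<lambda>g. (mk g, C - mk g)"])
    fix g assume g: "g \<in> PiE ?K ?B"
    show "restrict (Poly_Mapping.lookup (fst (mk g, C - mk g))) ?K = g"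
      using g by (auto simp: lookup_mk fun_eq_iff PiE_def extensional_def)
    show "(mk g, C - mk g) \<in> splits C"
      using g by (auto intro!: poly_mapping_eqI simp: lookup_mk lookup_add lookup_minus in_keys_iff PiE_def Pi_def)
    show "(case (mk g, C - mk g) of (c', c) \<Rightarrow> \<Prod>i\<in>?K. \<phi> i (Poly_Mapping.lookup c' i) (Poly_Mapping.lookup c i)) =
          (\<Prod>i\<in>?K. \<phi> i (g i) (Poly_Mapping.lookup C i - g i))"
      by (auto intro!: prod.cong simp: lookup_mk lookup_minus)
  next
    fix p assume "p \<in> splits C"
    then have pc: "fst p + snd p = C" by simp
    have "Poly_Mapping.keys (fst p) \<subseteq> ?K"
      using pc by (auto simp: in_keys_iff lookup_add)
    then have mk_fst: "mk (restrict (Poly_Mapping.lookup (fst p)) ?K) = fst p"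
      by (auto intro!: poly_mapping_eqI simp: lookup_mk in_keys_iff)
    show "(mk (restrict (Poly_Mapping.lookup (fst p)) ?K), C - mk (restrict (Poly_Mapping.lookup (fst p)) ?K)) = p"
      unfolding mk_fst using pc by (metis add_diff_cancel_left' prod.collapse)
    show "restrict (Poly_Mapping.lookup (fst p)) ?K \<in> PiE ?K ?B"
      using pc by (auto simp: lookup_add)
  qed
  finally show ?thesis by simp
qed

definition mono_t1 :: mono where "mono_t1 = Poly_Mapping.single 0 1"

lemma lookup_mono_t1: "Poly_Mapping.lookup mono_t1 i = (if i = 0 then 1 else 0)"
  by (simp add: mono_t1_def lookup_single)

lemma keys_mono_t1: "Poly_Mapping.keys mono_t1 = {0}"
  by (simp add: mono_t1_def)

text \<open>Reindexing a sum over splittings of A + t_1 weighted by the t_1-exponent of the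
  first part: this is how a derivative in t'_1 acts on coefficients.\<close>
lemma sum_splits_shift_t1:
  fixes G :: "mono \<Rightarrow> mono \<Rightarrow> complex"
  shows "(\<Sum>(x,y)\<in>splits (A + mono_t1). of_nat (Poly_Mapping.lookup x 0) * G x y)
       = (\<Sum>(x,y)\<in>splits A. of_nat (Poly_Mapping.lookup x 0 + 1) * G (x + mono_t1) y)"
proof -
  let ?f = "\<lambda>p::mono\<times>mono. (fst p + mono_t1, snd p)"
  let ?h = "\<lambda>p::mono\<times>mono. of_nat (Poly_Mapping.lookup (fst p) 0) * G (fst p) (snd p)"
  have inj: "inj_on ?f (splits A)"
    by (rule inj_onI) (auto simp: prod_eq_iff)
  have "(\<Sum>(x,y)\<in>splits A. of_nat (Poly_Mapping.lookup x 0 + 1) * G (x + mono_t1) y) = (\<Sum>p\<in>splits A. ?h (?f p))"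
    by (rule sum.cong[OF refl]) (auto simp: lookup_add lookup_mono_t1)
  also have "\<dots> = (\<Sum>p\<in>?f ` splits A. ?h p)"
    by (simp add: sum.reindex[OF inj])
  also have "\<dots> = (\<Sum>p\<in>splits (A + mono_t1). ?h p)"
  proof (rule sum.mono_neutral_left)
    show "finite (splits (A + mono_t1))" by (rule finite_splits)
    show "?f ` splits A \<subseteq> splits (A + mono_t1)" by (auto simp: ac_simps)
    (* A splitting of A + t_1 whose first part contains t_1 comes from a splitting of A. *)
    show "\<forall>p\<in>splits (A + mono_t1) - ?f ` splits A. ?h p = 0"
    proof
      fix p assume p: "p \<in> splits (A + mono_t1) - ?f ` splits A"
      show "?h p = 0"
      proof (rule ccontr)
        assume "?h p \<noteq> 0"
        then have "Poly_Mapping.lookup (fst p) 0 \<noteq> 0" by auto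
        then have e1: "fst p - mono_t1 + mono_t1 = fst p"
          by (intro poly_mapping_eqI) (simp add: lookup_add lookup_minus lookup_mono_t1)
        have "(fst p - mono_t1 + snd p) + mono_t1 = (fst p - mono_t1 + mono_t1) + snd p"
          by (simp add: ac_simps)
        also have "\<dots> = fst p + snd p" using e1 by simp
        also have "\<dots> = A + mono_t1" using p by simp
        finally have "(fst p - mono_t1, snd p) \<in> splits A" by simp
        moreover have "p = ?f (fst p - mono_t1, snd p)" using e1 by simp
        ultimately show False using p by blast
      qed
    qed
  qed
  finally show ?thesis by (simp add: case_prod_unfold)
qed

lemma wt_as_sum: "finite K \<Longrightarrow> Poly_Mapping.keys e \<subseteq> K \<Longrightarrow>
   wt e = (\<Sum>i\<in>K. (i+1) * Poly_Mapping.lookup e i)"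
  unfolding wt_def by (rule sum.mono_neutral_left) (auto simp: in_keys_iff)

text \<open>The weight is additive, and only the trivial monomial has weight 0 and only
  t_1 has weight 1; so the shift coefficients of order 0 and 1 are explicit.\<close>
lemma wt_add: "wt (a + b) = wt a + wt b"
proof -
  have f: "finite (Poly_Mapping.keys a \<union> Poly_Mapping.keys b)" by simp
  have "wt (a + b) = (\<Sum>i\<in>Poly_Mapping.keys a \<union> Poly_Mapping.keys b. (i+1) * Poly_Mapping.lookup (a + b) i)"
    by (rule wt_as_sum[OF f]) (rule keys_add)
  also have "\<dots> = wt a + wt b"
    by (simp add: wt_as_sum[OF f, of a] wt_as_sum[OF f, of b] lookup_add distrib_left sum.distrib)
  finally show ?thesis .
qed

lemma wt_zero [simp]: "wt 0 = 0"
  by (simp add: wt_def)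

lemma wt_mono_t1 [simp]: "wt mono_t1 = 1"
  by (simp add: wt_def keys_mono_t1 lookup_mono_t1)

lemma wt_eq_0: "wt e = 0 \<longleftrightarrow> e = 0"
proof
  assume "wt e = 0"
  then have "\<forall>i\<in>Poly_Mapping.keys e. (i+1) * Poly_Mapping.lookup e i = 0"
    unfolding wt_def by simp
  then show "e = 0" by (intro poly_mapping_eqI) (auto simp: in_keys_iff)
qed simp

lemma wt_eq_1: "wt e = 1 \<longleftrightarrow> e = mono_t1"
proof
  assume wt1: "wt e = 1"
  then obtain k where k: "k \<in> Poly_Mapping.keys e"
    by (metis all_not_in_conv keys_eq_empty wt_eq_0 zero_neq_one)
  have "(k+1) * Poly_Mapping.lookup e k \<le> wt e"
    unfolding wt_def by (rule member_le_sum) (use k in auto)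
  moreover have "(k+1) * 1 \<le> (k+1) * Poly_Mapping.lookup e k"
    using k by (intro mult_le_mono2) (simp add: in_keys_iff)
  ultimately have "k = 0" using wt1 by simp
  then have split: "e = mono_t1 + (e - mono_t1)"
    using k by (intro poly_mapping_eqI) (auto simp: lookup_add lookup_minus lookup_mono_t1 in_keys_iff)
  have "wt e = wt mono_t1 + wt (e - mono_t1)"
    using arg_cong[OF split, of wt] by (simp only: wt_add)
  then have "e - mono_t1 = 0" using wt1 by (simp add: wt_eq_0)
  then show "e = mono_t1" using split by simp
qed simp

section \<open>Shifts, products and derivatives of series\<close>

lemma shiftT_0 [simp]: "shiftT eps F 0 = F"
  by (simp add: shiftT_def wt_eq_0)

lemma shiftTb_0 [simp]: "shiftTb eps F 0 = F"
  by (simp add: shiftTb_def wt_eq_0)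

lemma shiftT_1: "shiftT eps F 1 a b = eps * dT F a b"
proof -
  have "{e. wt e = 1} = {mono_t1}" using wt_eq_1 by auto
  then show ?thesis by (simp add: shiftT_def dT_def keys_mono_t1 lookup_mono_t1 mono_t1_def)
qed

lemma shiftTb_1: "shiftTb eps F 1 a b = eps * dTb F a b"
proof -
  have "{e. wt e = 1} = {mono_t1}" using wt_eq_1 by auto
  then show ?thesis by (simp add: shiftTb_def dTb_def keys_mono_t1 lookup_mono_t1 mono_t1_def)
qed

lemma shiftTb_dT:
  "shiftTb e (dT F) j x b = of_nat (Poly_Mapping.lookup x 0 + 1) * shiftTb e F j (x + mono_t1) b"
  by (simp add: shiftTb_def dT_def sum_distrib_left mono_t1_def mult_ac)

lemma pairsum_neg: "n < 0 \<Longrightarrow> pairsum n g = 0"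
  by (simp add: pairsum_def)

lemma pairsum_0: "pairsum 0 g = g 0 0"
  by (simp add: pairsum_def)

lemma pairsum_1: "pairsum 1 g = g 0 1 + g 1 0"
  by (simp add: pairsum_def)

lemma fmul_comm: "fmul F G a b = fmul G F a b"
  unfolding fmul_def case_prod_unfold
  by (subst sum_splits_swap, rule sum.cong[OF refl], subst sum_splits_swap) (simp add: mult.commute)

lemma dT_dTb: "dT (dTb F) = dTb (dT F)"
  by (simp add: dT_def dTb_def fun_eq_iff lookup_add mult_ac)

lemma hirotaTTb_self:
  "hirotaTTb F F a b = 2 * (fmul (dTb (dT F)) F a b - fmul (dT F) (dTb F) a b)"
  unfolding hirotaTTb_def dT_dTb
  by (simp add: fmul_comm[of F "dTb (dT F)"] fmul_comm[of "dTb F" "dT F"] algebra_simps)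

section \<open>Coefficient sums of the Schur factor\<close>

text \<open>Coefficients of exp(sigma x) exp(-sigma x) = 1 and of its x-derivative
  sigma exp(sigma x) exp(-sigma x) = sigma, by the binomial theorem.\<close>
lemma sum_exp_coeffs:
  fixes \<sigma> :: complex
  shows "(\<Sum>m\<in>{0..N}. \<sigma>^m / fact m * ((-\<sigma>)^(N-m) / fact (N-m))) = (if N = 0 then 1 else 0)"
proof -
  have "(\<sigma> + -\<sigma>)^N = (\<Sum>m\<le>N. of_nat (N choose m) * \<sigma>^m * (-\<sigma>)^(N-m))"
    by (rule binomial_ring)
  also have "\<dots> = fact N * (\<Sum>m\<in>{0..N}. \<sigma>^m / fact m * ((-\<sigma>)^(N-m) / fact (N-m)))"
    by (auto intro!: sum.cong simp: binomial_fact atMost_atLeast0 sum_distrib_left)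
  finally have "(\<Sum>m\<in>{0..N}. \<sigma>^m / fact m * ((-\<sigma>)^(N-m) / fact (N-m))) = 0^N / fact N"
    by (simp add: field_simps)
  then show ?thesis by simp
qed

lemma sum_exp_coeffs_deriv:
  fixes \<sigma> :: complex
  shows "(\<Sum>m\<in>{0..N}. of_nat m * (\<sigma>^m / fact m * ((-\<sigma>)^(N-m) / fact (N-m)))) = (if N = 1 then \<sigma> else 0)"
proof (cases N)
  case (Suc M)
  have fact_Suc': "fact (Suc k) = (of_nat (Suc k) :: complex) * fact k" for k
    by (simp add: fact_Suc)
  have "(\<Sum>m\<in>{0..N}. of_nat m * (\<sigma>^m / fact m * ((-\<sigma>)^(N-m) / fact (N-m))))
      = (\<Sum>k\<in>{0..M}. of_nat (Suc k) * (\<sigma>^(Suc k) / fact (Suc k) * ((-\<sigma>)^(M-k) / fact (M-k))))"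
    unfolding Suc by (subst sum.atLeast0_atMost_Suc_shift) simp
  also have "\<dots> = \<sigma> * (\<Sum>k\<in>{0..M}. \<sigma>^k / fact k * ((-\<sigma>)^(M-k) / fact (M-k)))"
    unfolding sum_distrib_left fact_Suc' by (rule sum.cong[OF refl]) (simp add: field_simps del: of_nat_Suc)
  also have "\<dots> = \<sigma> * (if M = 0 then 1 else 0)"
    by (simp only: sum_exp_coeffs)
  finally show ?thesis by (simp add: Suc)
qed simp

lemma schur_prod:
  assumes "c' + c = C"
  shows "schur \<sigma> c' c = (\<Prod>i\<in>Poly_Mapping.keys C.
      \<sigma>^(Poly_Mapping.lookup c' i) / fact (Poly_Mapping.lookup c' i) *
      ((-\<sigma>)^(Poly_Mapping.lookup c i) / fact (Poly_Mapping.lookup c i)))"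
proof -
  have sub: "Poly_Mapping.keys c' \<subseteq> Poly_Mapping.keys C" "Poly_Mapping.keys c \<subseteq> Poly_Mapping.keys C"
    using assms by (auto simp: in_keys_iff lookup_add)
  show ?thesis
    unfolding schur_def prod.distrib
    by (subst prod.mono_neutral_left[OF _ sub(1)], simp, simp add: in_keys_iff)
       (subst prod.mono_neutral_left[OF _ sub(2)], simp, simp add: in_keys_iff, simp)
qed

lemma schur_prod_weighted:
  assumes "c' + c = C" "0 \<in> Poly_Mapping.keys C"
  shows "of_nat (Poly_Mapping.lookup c' 0) * schur \<sigma> c' c =
    (\<Prod>i\<in>Poly_Mapping.keys C. (if i = 0 then of_nat (Poly_Mapping.lookup c' i) else 1) *
      (\<sigma>^(Poly_Mapping.lookup c' i) / fact (Poly_Mapping.lookup c' i) *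
      ((-\<sigma>)^(Poly_Mapping.lookup c i) / fact (Poly_Mapping.lookup c i))))"
  using assms by (simp only: schur_prod[OF assms(1)] prod.distrib) (simp add: prod.delta)

text \<open>On the diagonal x' = x the factor exp(xi(sigma(x' - x), z)) equals 1: its
  coefficients sum to zero in every positive degree.\<close>
lemma sum_splits_schur: "(\<Sum>(c',c)\<in>splits C. schur \<sigma> c' c) = (if C = 0 then 1 else 0)"
proof -
  have "(\<Sum>(c',c)\<in>splits C. schur \<sigma> c' c) = (\<Sum>(c',c)\<in>splits C. \<Prod>i\<in>Poly_Mapping.keys C.
      \<sigma>^(Poly_Mapping.lookup c' i) / fact (Poly_Mapping.lookup c' i) *
      ((-\<sigma>)^(Poly_Mapping.lookup c i) / fact (Poly_Mapping.lookup c i)))"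
    by (rule sum.cong[OF refl]) (auto simp: schur_prod)
  also have "\<dots> = (\<Prod>i\<in>Poly_Mapping.keys C. (if Poly_Mapping.lookup C i = 0 then 1 else 0))"
    by (subst sum_splits_prod, rule prod.cong[OF refl], rule sum_exp_coeffs)
  also have "\<dots> = (if C = 0 then 1 else 0)"
  proof (cases "C = 0")
    case False
    then obtain i where "i \<in> Poly_Mapping.keys C"
      by (metis all_not_in_conv keys_eq_empty)
    then show ?thesis using False by (intro trans[OF prod_zero]) (auto simp: in_keys_iff)
  qed simp
  finally show ?thesis .
qed

lemma prod_keys_at_t1:
  assumes zero_key: "0 \<in> Poly_Mapping.keys C"
  shows "(\<Prod>i\<in>Poly_Mapping.keys C. if i = 0 then (if Poly_Mapping.lookup C 0 = 1 then \<sigma> else 0) else 0)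
   = (if C = mono_t1 then \<sigma> else (0::complex))"
proof (cases "C = mono_t1")
  case False
  have other_key: "\<exists>i\<in>Poly_Mapping.keys C. i \<noteq> 0" if one: "Poly_Mapping.lookup C 0 = 1"
  proof (rule ccontr)
    assume only_zero: "\<not> (\<exists>i\<in>Poly_Mapping.keys C. i \<noteq> 0)"
    have "Poly_Mapping.lookup C i = Poly_Mapping.lookup mono_t1 i" for i
    proof (cases "i = 0")
      case False
      then have "i \<notin> Poly_Mapping.keys C" using only_zero by blast
      then show ?thesis using False by (simp add: lookup_mono_t1 in_keys_iff)
    qed (simp add: one lookup_mono_t1)
    then have "C = mono_t1" by (rule poly_mapping_eqI)
    with False show False ..
  qed
  have "\<exists>i\<in>Poly_Mapping.keys C. (if i = 0 then (if Poly_Mapping.lookup C 0 = 1 then \<sigma> else 0) else 0) = 0"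
  proof (cases "Poly_Mapping.lookup C 0 = 1")
    case True
    then obtain i where "i \<in> Poly_Mapping.keys C" "i \<noteq> 0" using other_key by blast
    then show ?thesis by (intro bexI[of _ i]) simp_all
  next
    case False
    then show ?thesis using zero_key by (intro bexI[of _ 0]) simp_all
  qed
  then show ?thesis using False by (simp only: prod_zero finite_keys if_False)
qed (simp add: keys_mono_t1 lookup_mono_t1)

text \<open>The t'_1-derivative of the Schur factor on the diagonal: sigma in degree t_1,
  zero otherwise.\<close>
lemma sum_splits_schur_deriv:
  "(\<Sum>(c',c)\<in>splits C. of_nat (Poly_Mapping.lookup c' 0) * schur \<sigma> c' c) = (if C = mono_t1 then \<sigma> else 0)"
proof (cases "0 \<in> Poly_Mapping.keys C")
  case False
  then have "C \<noteq> mono_t1" by (auto simp: keys_mono_t1)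
  moreover have "\<forall>p\<in>splits C. Poly_Mapping.lookup (fst p) 0 = 0"
    using False by (auto simp: lookup_add in_keys_iff)
  ultimately show ?thesis by (auto intro!: sum.neutral)
next
  case True
  let ?\<phi> = "\<lambda>i m n. (if i = 0 then of_nat m else 1) * (\<sigma>^m / fact m * ((-\<sigma>)^n / fact n))"
  have "(\<Sum>(c',c)\<in>splits C. of_nat (Poly_Mapping.lookup c' 0) * schur \<sigma> c' c)
     = (\<Sum>(c',c)\<in>splits C. \<Prod>i\<in>Poly_Mapping.keys C. ?\<phi> i (Poly_Mapping.lookup c' i) (Poly_Mapping.lookup c i))"
    by (rule sum.cong[OF refl]) (simp only: mem_Collect_eq case_prod_beta schur_prod_weighted[OF _ True])
  also have "\<dots> = (\<Prod>i\<in>Poly_Mapping.keys C. \<Sum>m\<in>{0..Poly_Mapping.lookup C i}. ?\<phi> i m (Poly_Mapping.lookup C i - m))"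
    by (rule sum_splits_prod)
  also have "\<dots> = (\<Prod>i\<in>Poly_Mapping.keys C. if i = 0 then (if Poly_Mapping.lookup C 0 = 1 then \<sigma> else 0) else 0)"
    using sum_exp_coeffs sum_exp_coeffs_deriv by (intro prod.cong[OF refl]) (auto simp: in_keys_iff)
  also have "\<dots> = (if C = mono_t1 then \<sigma> else 0)"
    using True by (rule prod_keys_at_t1)
  finally show ?thesis .
qed

section \<open>Restriction to the diagonal\<close>

text \<open>A series G in the doubled variables (t', tbar', t, tbar), given by its coefficient
  G x u y v of t'^x tbar'^u t^y tbar^v, restricted to t' = t, tbar' = tbar; and the
  restriction of its t'_1-derivative.\<close>
definition diag :: "(mono \<Rightarrow> mono \<Rightarrow> mono \<Rightarrow> mono \<Rightarrow> complex) \<Rightarrow> fser" where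
  "diag G A B = (\<Sum>(x,y)\<in>splits A. \<Sum>(u,v)\<in>splits B. G x u y v)"

definition diag_dt1 :: "(mono \<Rightarrow> mono \<Rightarrow> mono \<Rightarrow> mono \<Rightarrow> complex) \<Rightarrow> fser" where
  "diag_dt1 G A B =
     (\<Sum>(x,y)\<in>splits (A + mono_t1). \<Sum>(u,v)\<in>splits B. of_nat (Poly_Mapping.lookup x 0) * G x u y v)"

lemma diag_add: "diag (\<lambda>x u y v. G x u y v + H x u y v) A B = diag G A B + diag H A B"
  unfolding diag_def by (simp only: case_prod_unfold sum.distrib)

lemma diag_dt1_add: "diag_dt1 (\<lambda>x u y v. G x u y v + H x u y v) A B = diag_dt1 G A B + diag_dt1 H A B"
  unfolding diag_dt1_def by (simp only: case_prod_unfold distrib_left sum.distrib)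

text \<open>The residue term resT with the Schur factor removed: the tbar-coefficient B of
  the sum over j + l = n of the shifted series, at t-exponents p (primed) and q.\<close>
definition shifted_product :: "complex \<Rightarrow> fser \<Rightarrow> complex \<Rightarrow> fser \<Rightarrow> int \<Rightarrow> mono \<Rightarrow> mono \<Rightarrow> mono \<Rightarrow> complex" where
  "shifted_product e' F' e F n p q B =
     (\<Sum>(u,v)\<in>splits B. pairsum n (\<lambda>j l. shiftT e' F' j p u * shiftT e F l q v))"

lemma sum_resT_tbar:
  "(\<Sum>(u,v)\<in>splits B. K * resT \<sigma> d F' e' F e x u y v)
   = (\<Sum>(c',p)\<in>splits x. \<Sum>(c,q)\<in>splits y.
        K * schur \<sigma> c' c * shifted_product e' F' e F (int (wt (c'+c)) + d) p q B)"
proof -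
  have "(\<Sum>(u,v)\<in>splits B. K * resT \<sigma> d F' e' F e x u y v)
    = (\<Sum>uv\<in>splits B. \<Sum>cp\<in>splits x. \<Sum>cq\<in>splits y. K * (schur \<sigma> (fst cp) (fst cq) *
        pairsum (int (wt (fst cp) + wt (fst cq)) + d)
          (\<lambda>j l. shiftT e' F' j (snd cp) (fst uv) * shiftT e F l (snd cq) (snd uv))))"
    unfolding resT_def by (simp only: case_prod_unfold sum_distrib_left)
  also have "\<dots> = (\<Sum>cp\<in>splits x. \<Sum>cq\<in>splits y. \<Sum>uv\<in>splits B. K * (schur \<sigma> (fst cp) (fst cq) *
        pairsum (int (wt (fst cp) + wt (fst cq)) + d)
          (\<lambda>j l. shiftT e' F' j (snd cp) (fst uv) * shiftT e F l (snd cq) (snd uv))))"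
    by (subst sum.swap) (rule sum.cong[OF refl], rule sum.swap)
  also have "\<dots> = (\<Sum>(c',p)\<in>splits x. \<Sum>(c,q)\<in>splits y.
        K * schur \<sigma> c' c * shifted_product e' F' e F (int (wt (c'+c)) + d) p q B)"
    unfolding shifted_product_def by (simp only: case_prod_unfold sum_distrib_left wt_add mult.assoc)
  finally show ?thesis .
qed

lemma diag_resT:
  "diag (resT \<sigma> d F' e' F e) A B = (\<Sum>(p,q)\<in>splits A. shifted_product e' F' e F d p q B)"
proof -
  have "diag (resT \<sigma> d F' e' F e) A B
      = (\<Sum>(x,y)\<in>splits A. \<Sum>(c',p)\<in>splits x. \<Sum>(c,q)\<in>splits y.
           schur \<sigma> c' c * shifted_product e' F' e F (int (wt (c'+c)) + d) p q B)"
    unfolding diag_def using sum_resT_tbar[where K=1] by simp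
  also have "\<dots> = (\<Sum>(X,Y)\<in>splits A. (\<Sum>(c',c)\<in>splits X. schur \<sigma> c' c) *
                      (\<Sum>(p,q)\<in>splits Y. shifted_product e' F' e F (int (wt X) + d) p q B))"
    by (rule sum_splits_factor)
  also have "\<dots> = (\<Sum>(X,Y)\<in>splits (A + 0).
                      if X = 0 then (\<Sum>(p,q)\<in>splits Y. shifted_product e' F' e F d p q B) else 0)"
    unfolding add_0_right by (rule sum.cong[OF refl]) (auto simp: sum_splits_schur)
  also have "\<dots> = (\<Sum>(p,q)\<in>splits A. shifted_product e' F' e F d p q B)"
    by (rule sum_splits_delta)
  finally show ?thesis .
qed

lemma diag_resT_1:
  "diag (resT \<sigma> 1 F' e' F e) A B = e * fmul F' (dT F) A B + e' * fmul (dT F') F A B"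
  unfolding diag_resT shifted_product_def fmul_def
  by (simp add: pairsum_1 shiftT_1[unfolded One_nat_def] sum.distrib sum_distrib_left case_prod_unfold mult_ac)

lemma diag_resT_neg:
  "d < 0 \<Longrightarrow> diag (resT \<sigma> d F' e' F e) A B = 0"
  by (simp add: diag_resT shifted_product_def pairsum_neg)

text \<open>For resTb the Schur factor lives in the tbar-variables, so it already disappears
  under the inner (tbar) sum of the diagonal restriction.\<close>
lemma sum_resTb_tbar:
  "(\<Sum>(u,v)\<in>splits B. resTb \<sigma> d F' e' F e x u y v)
   = (\<Sum>(w,z)\<in>splits B. pairsum d (\<lambda>j l. shiftTb e' F' j x w * shiftTb e F l y z))"
proof -
  have "(\<Sum>(u,v)\<in>splits B. resTb \<sigma> d F' e' F e x u y v)
     = (\<Sum>(u,v)\<in>splits B. \<Sum>(c',w)\<in>splits u. \<Sum>(c,z)\<in>splits v. schur \<sigma> c' c *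
          pairsum (int (wt (c' + c)) + d) (\<lambda>j l. shiftTb e' F' j x w * shiftTb e F l y z))"
    unfolding resTb_def wt_add by simp
  also have "\<dots> = (\<Sum>(X,Y)\<in>splits B. (\<Sum>(c',c)\<in>splits X. schur \<sigma> c' c) *
          (\<Sum>(w,z)\<in>splits Y. pairsum (int (wt X) + d) (\<lambda>j l. shiftTb e' F' j x w * shiftTb e F l y z)))"
    by (rule sum_splits_factor)
  also have "\<dots> = (\<Sum>(X,Y)\<in>splits (B + 0). if X = 0 then
          (\<Sum>(w,z)\<in>splits Y. pairsum d (\<lambda>j l. shiftTb e' F' j x w * shiftTb e F l y z)) else 0)"
    unfolding add_0_right by (rule sum.cong[OF refl]) (auto simp: sum_splits_schur)
  also have "\<dots> = (\<Sum>(w,z)\<in>splits B. pairsum d (\<lambda>j l. shiftTb e' F' j x w * shiftTb e F l y z))"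
    by (rule sum_splits_delta)
  finally show ?thesis .
qed

lemma diag_resTb_1:
  "diag (resTb \<sigma> 1 F' e' F e) A B = e * fmul F' (dTb F) A B + e' * fmul (dTb F') F A B"
  unfolding diag_def sum_resTb_tbar fmul_def
  by (simp add: pairsum_1 shiftTb_1[unfolded One_nat_def] sum.distrib sum_distrib_left case_prod_unfold mult_ac)

lemma diag_resTb_neg:
  "d < 0 \<Longrightarrow> diag (resTb \<sigma> d F' e' F e) A B = 0"
  by (simp add: diag_def sum_resTb_tbar pairsum_neg)

text \<open>Residue index -1 (z-exponent 0) differentiated in t'_1 on the diagonal: only the
  derivative of the Schur factor survives, giving sigma times the product.\<close>
lemma diag_dt1_resT:
  "diag_dt1 (resT \<sigma> (-1) F' e' F e) A B = \<sigma> * fmul F' F A B"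
proof -
  define P where "P = (\<lambda>C p q. shifted_product e' F' e F (int (wt C) + -1) p q B)"
  define Q where "Q = (\<lambda>C p q. of_nat (Poly_Mapping.lookup p 0) * P C p q)"
  define W where "W = (\<lambda>c' c. of_nat (Poly_Mapping.lookup c' 0) * schur \<sigma> c' c)"
  (* The weight x_0 = c'_0 + p_0 splits by the Leibniz rule. *)
  have leibniz: "(\<Sum>(u,v)\<in>splits B. of_nat (Poly_Mapping.lookup x 0) * resT \<sigma> (-1) F' e' F e x u y v)
     = (\<Sum>(c',p)\<in>splits x. \<Sum>(c,q)\<in>splits y. W c' c * P (c'+c) p q + schur \<sigma> c' c * Q (c'+c) p q)"
    for x y
    unfolding sum_resT_tbar W_def P_def Q_def
    by (rule sum.cong[OF refl], clarify, rule sum.cong[OF refl], clarify) (simp add: lookup_add algebra_simps)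
  have "diag_dt1 (resT \<sigma> (-1) F' e' F e) A B
      = (\<Sum>(X,Y)\<in>splits (A + mono_t1). (\<Sum>(c',c)\<in>splits X. W c' c) * (\<Sum>(p,q)\<in>splits Y. P X p q))
      + (\<Sum>(X,Y)\<in>splits (A + mono_t1). (\<Sum>(c',c)\<in>splits X. schur \<sigma> c' c) * (\<Sum>(p,q)\<in>splits Y. Q X p q))"
    unfolding diag_dt1_def leibniz
    by (simp only: case_prod_unfold sum.distrib sum_splits_factor[unfolded case_prod_unfold])
  also have "(\<Sum>(X,Y)\<in>splits (A + mono_t1). (\<Sum>(c',c)\<in>splits X. schur \<sigma> c' c) * (\<Sum>(p,q)\<in>splits Y. Q X p q)) = 0"
    by (rule sum.neutral) (auto simp: sum_splits_schur Q_def P_def shifted_product_def pairsum_neg)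
  also have "(\<Sum>(X,Y)\<in>splits (A + mono_t1). (\<Sum>(c',c)\<in>splits X. W c' c) * (\<Sum>(p,q)\<in>splits Y. P X p q))
     = (\<Sum>(X,Y)\<in>splits (A + mono_t1). if X = mono_t1 then \<sigma> * (\<Sum>(p,q)\<in>splits Y. P mono_t1 p q) else 0)"
    by (rule sum.cong[OF refl]) (auto simp: W_def sum_splits_schur_deriv)
  also have "\<dots> = \<sigma> * (\<Sum>(p,q)\<in>splits A. P mono_t1 p q)"
    by (rule sum_splits_delta)
  also have "\<dots> = \<sigma> * fmul F' F A B"
    by (simp add: P_def wt_eq_1 shifted_product_def pairsum_0 shiftT_0 fmul_def)
  finally show ?thesis by simp
qed

lemma resTb_dT:
  "resTb \<sigma> d (dT F') e' F e x u y v
   = of_nat (Poly_Mapping.lookup x 0 + 1) * resTb \<sigma> d F' e' F e (x + mono_t1) u y v"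
proof -
  have pull: "\<And>c s n g. (c::complex) * (s * pairsum n g) = s * pairsum n (\<lambda>j l. c * g j l)"
    by (simp add: pairsum_def sum_distrib_left mult_ac)
  show ?thesis
    by (simp only: resTb_def shiftTb_dT case_prod_unfold sum_distrib_left pull mult.assoc)
qed

text \<open>Differentiating resTb in t'_1 on the diagonal amounts to differentiating its
  first series: resTb carries no t-dependent exponential.\<close>
lemma diag_dt1_resTb:
  "diag_dt1 (resTb \<sigma> d F' e' F e) A B = diag (resTb \<sigma> d (dT F') e' F e) A B"
proof -
  have "diag_dt1 (resTb \<sigma> d F' e' F e) A B
     = (\<Sum>(x,y)\<in>splits (A + mono_t1). of_nat (Poly_Mapping.lookup x 0) *
          (\<Sum>(u,v)\<in>splits B. resTb \<sigma> d F' e' F e x u y v))"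
    by (simp add: diag_dt1_def sum_distrib_left case_prod_unfold)
  also have "\<dots> = (\<Sum>(x,y)\<in>splits A. of_nat (Poly_Mapping.lookup x 0 + 1) *
          (\<Sum>(u,v)\<in>splits B. resTb \<sigma> d F' e' F e (x + mono_t1) u y v))"
    by (rule sum_splits_shift_t1)
  also have "\<dots> = diag (resTb \<sigma> d (dT F') e' F e) A B"
    by (simp add: diag_def resTb_dT sum_distrib_left case_prod_unfold)
  finally show ?thesis .
qed

lemma pfaff_toda_bilinear:
  assumes "pfaff_toda_tau tau"
  shows "resT 1 ((s' + r' - s - r) + 1) (tau s' r') (-1) (tau s r) 1 a' b' a b
      + resT (-1) ((s + r - s' - r' - 4) + 1) (tau (s' + 1) (r' + 1)) 1 (tau (s - 1) (r - 1)) (-1) a' b' a b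
      = resTb 1 (- (s' - r' - s + r) - 1) (tau (s' + 1) r') (-1) (tau (s - 1) r) 1 a' b' a b
      + resTb (-1) (- (s - r - s' + r') - 1) (tau s' (r' + 1)) 1 (tau s (r - 1)) (-1) a' b' a b"
  using assms unfolding pfaff_toda_tau_def by blast

theorem mainTheorem14:
  assumes "pfaff_toda_tau tau"
  shows "(\<forall>s r a b. hirotaTTb (tau s r) (tau s r) a b / 2
                    + fmul (tau (s - 1) r) (tau (s + 1) r) a b
                    - fmul (tau s (r - 1)) (tau s (r + 1)) a b = 0)
       \<and> (\<forall>s r a b. hirotaT (tau s r) (tau (s + 1) (r - 1)) a b
                    + hirotaTb (tau s (r - 1)) (tau (s + 1) r) a b = 0)"
proof (intro conjI allI)
  fix s r a b
  (* (s, r, s', r') = (s + 1, r, s - 1, r), differentiated in t'_1 on the diagonal. *)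
  have "resT 1 (-1) (tau (s-1) r) (-1) (tau (s+1) r) 1 x u y v
      + resT (-1) (-1) (tau s (r + 1)) 1 (tau s (r - 1)) (-1) x u y v
      = resTb 1 1 (tau s r) (-1) (tau s r) 1 x u y v
      + resTb (-1) (-3) (tau (s-1) (r + 1)) 1 (tau (s+1) (r - 1)) (-1) x u y v" for x u y v
    using pfaff_toda_bilinear[OF assms, where s="s+1" and r=r and s'="s-1" and r'=r] by simp
  then have "diag_dt1 (\<lambda>x u y v. resT 1 (-1) (tau (s-1) r) (-1) (tau (s+1) r) 1 x u y v
                         + resT (-1) (-1) (tau s (r + 1)) 1 (tau s (r - 1)) (-1) x u y v) a b
           = diag_dt1 (\<lambda>x u y v. resTb 1 1 (tau s r) (-1) (tau s r) 1 x u y v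
                         + resTb (-1) (-3) (tau (s-1) (r + 1)) 1 (tau (s+1) (r - 1)) (-1) x u y v) a b"
    by simp
  then have toda: "fmul (tau (s-1) r) (tau (s+1) r) a b - fmul (tau s (r + 1)) (tau s (r - 1)) a b
      = fmul (dT (tau s r)) (dTb (tau s r)) a b - fmul (dTb (dT (tau s r))) (tau s r) a b"
    by (simp only: diag_dt1_add diag_dt1_resT diag_dt1_resTb diag_resTb_1 diag_resTb_neg) simp
  have "hirotaTTb (tau s r) (tau s r) a b / 2
          + fmul (tau (s - 1) r) (tau (s + 1) r) a b - fmul (tau s (r - 1)) (tau s (r + 1)) a b
      = (fmul (tau (s-1) r) (tau (s+1) r) a b - fmul (tau s (r + 1)) (tau s (r - 1)) a b)
        - (fmul (dT (tau s r)) (dTb (tau s r)) a b - fmul (dTb (dT (tau s r))) (tau s r) a b)"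
    by (simp add: hirotaTTb_self fmul_comm[of "tau s (r - 1)"] field_simps)
  also have "\<dots> = 0" unfolding toda by simp
  finally show "hirotaTTb (tau s r) (tau s r) a b / 2
                    + fmul (tau (s - 1) r) (tau (s + 1) r) a b
                    - fmul (tau s (r - 1)) (tau s (r + 1)) a b = 0" .
next
  fix s r a b
  (* (s, r, s', r') = (s + 1, r - 1, s, r), restricted to the diagonal. *)
  have "resT 1 1 (tau s r) (-1) (tau (s+1) (r-1)) 1 x u y v
      + resT (-1) (-3) (tau (s+1) (r+1)) 1 (tau s (r-2)) (-1) x u y v
      = resTb 1 1 (tau (s+1) r) (-1) (tau s (r-1)) 1 x u y v
      + resTb (-1) (-3) (tau s (r+1)) 1 (tau (s+1) (r-2)) (-1) x u y v" for x u y v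
    using pfaff_toda_bilinear[OF assms, where s="s+1" and r="r-1" and s'=s and r'=r]
    by (simp add: algebra_simps)
  then have "diag (\<lambda>x u y v. resT 1 1 (tau s r) (-1) (tau (s+1) (r-1)) 1 x u y v
                     + resT (-1) (-3) (tau (s+1) (r+1)) 1 (tau s (r-2)) (-1) x u y v) a b
           = diag (\<lambda>x u y v. resTb 1 1 (tau (s+1) r) (-1) (tau s (r-1)) 1 x u y v
                     + resTb (-1) (-3) (tau s (r+1)) 1 (tau (s+1) (r-2)) (-1) x u y v) a b"
    by simp
  then have toda: "fmul (tau s r) (dT (tau (s+1) (r-1))) a b - fmul (dT (tau s r)) (tau (s+1) (r-1)) a b
      = fmul (tau (s+1) r) (dTb (tau s (r-1))) a b - fmul (dTb (tau (s+1) r)) (tau s (r-1)) a b"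
    by (simp only: diag_add diag_resT_1 diag_resT_neg diag_resTb_1 diag_resTb_neg) simp
  have "hirotaT (tau s r) (tau (s + 1) (r - 1)) a b + hirotaTb (tau s (r - 1)) (tau (s + 1) r) a b
      = (fmul (tau (s+1) r) (dTb (tau s (r-1))) a b - fmul (dTb (tau (s+1) r)) (tau s (r-1)) a b)
        - (fmul (tau s r) (dT (tau (s+1) (r-1))) a b - fmul (dT (tau s r)) (tau (s+1) (r-1)) a b)"
    unfolding hirotaT_def hirotaTb_def
    by (simp add: fmul_comm[of "tau s (r - 1)"] fmul_comm[of "dTb (tau s (r - 1))"] algebra_simps)
  also have "\<dots> = 0" unfolding toda by simp
  finally show "hirotaT (tau s r) (tau (s + 1) (r - 1)) a b
                    + hirotaTb (tau s (r - 1)) (tau (s + 1) r) a b = 0" .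
qed

end
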